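(* In the stochastic epidemic model described in the context, let $a\in\mathcal A_i$, $b\in\mathcal A_j$ be distinct nodes and $t\ge0$. Let $T\in[0,t]$ be such that $t-T$ is the time of the last update of $1_{(a,b)}$ during $[0,t]$ ($T=t$ if none), and let $K:=t-\min\{t,\inf\{\tau\ge0:b\in\mathcal I(\tau)\}\}$ (with $\inf\emptyset=\infty$). Then $K$ is independent of the pair $(T,1_{(a,b)}(t))$.
   Context: Stochastic epidemic model with population size $n$: node set $[n]$ partitioned into age groups $\mathcal A_1,\dots,\mathcal A_m$; parameters $B_{ij}\ge0$, $\rho_{ij}>0$ with $\rho_{ij}/n\le1$, $\gamma_i>0$, $\lambda>0$. A state consists of disease states $x_a\in\{0,1,-1\}$ (susceptible, infected, recovered), edge states $1_{(a,b)}\in\{0,1\}$ for ordered pairs of distinct nodes ($1$ = directed edge from $b$ to $a$), and auxiliary bits flipped at each update of a pair's edge state. $\{\mathbf X(t)\}$ is a right-continuous time-homogeneous continuous-time Markov chain with only these transitions: susceptible $a\in\mathcal A_i$ becomes infected at rate $\sum_kB_{ik}\sum_{c\in\mathcal I_k}1_{(a,c)}$ (with $\mathcal I_k$ the currently infected nodes of $\mathcal A_k$); infected $a\in\mathcal A_i$ recovers at rate $\gamma_i$; the edge state of $(a,b)\in\mathcal A_i\times\mathcal A_j$ is updated to $1$ at rate $\lambda\rho_{ij}/n$ and to $0$ at rate $\lambda(1-\rho_{ij}/n)$ (auxiliary bit flipped each time). $\mathcal I(\tau)$ is the set of infected nodes at time $\tau$ and $1_{(a,b)}(t)$ the edge state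 of $(a,b)$ at time $t$. The initial state $\mathbf X(0)$ is deterministic. *)

theory Defs
  imports "HOL-Probability.Probability"
begin

text \<open>A state: disease states (nat => int: 0 susceptible, 1 infected, -1 recovered),
  edge states on ordered pairs (a,b) (True = directed edge from b to a),
  and auxiliary bits on ordered pairs (flipped at each update of the edge state).\<close>

type_synonym state = "(nat \<Rightarrow> int) \<times> (nat \<times> nat \<Rightarrow> bool) \<times> (nat \<times> nat \<Rightarrow> bool)"

definition dis :: "state \<Rightarrow> nat \<Rightarrow> int" where "dis s = fst s"
definition edge :: "state \<Rightarrow> nat \<times> nat \<Rightarrow> bool" where "edge s = fst (snd s)"
definition aux :: "state \<Rightarrow> nat \<times> nat \<Rightarrow> bool" where "aux s = snd (snd s)"

definition valid_states :: "nat \<Rightarrow> state set" where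
  "valid_states n = {s. (\<forall>a. dis s a \<in> {-1,0,1} \<and> (a \<ge> n \<longrightarrow> dis s a = 0))
      \<and> (\<forall>a b. \<not> (a < n \<and> b < n \<and> a \<noteq> b) \<longrightarrow> \<not> edge s (a,b) \<and> \<not> aux s (a,b))}"

definition set_dis :: "state \<Rightarrow> nat \<Rightarrow> int \<Rightarrow> state" where
  "set_dis s a v = ((dis s)(a := v), edge s, aux s)"

definition upd_edge :: "state \<Rightarrow> nat \<Rightarrow> nat \<Rightarrow> bool \<Rightarrow> state" where
  "upd_edge s a b v = (dis s, (edge s)((a,b) := v), (aux s)((a,b) := \<not> aux s (a,b)))"

definition infection_rate ::
  "nat \<Rightarrow> nat \<Rightarrow> (nat \<Rightarrow> nat) \<Rightarrow> (nat \<Rightarrow> nat \<Rightarrow> real) \<Rightarrow> state \<Rightarrow> nat \<Rightarrow> real" where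
  "infection_rate n m grp B s a =
     (\<Sum>k<m. B (grp a) k * real (card {c. c < n \<and> grp c = k \<and> dis s c = 1 \<and> edge s (a,c)}))"

definition trans_rate ::
  "nat \<Rightarrow> nat \<Rightarrow> (nat \<Rightarrow> nat) \<Rightarrow> (nat \<Rightarrow> nat \<Rightarrow> real) \<Rightarrow> (nat \<Rightarrow> nat \<Rightarrow> real)
   \<Rightarrow> (nat \<Rightarrow> real) \<Rightarrow> real \<Rightarrow> state \<Rightarrow> state \<Rightarrow> real" where
  "trans_rate n m grp B \<rho> \<gamma> lam s s' =
     (\<Sum>a<n. if dis s a = 0 \<and> s' = set_dis s a 1 then infection_rate n m grp B s a else 0)
   + (\<Sum>a<n. if dis s a = 1 \<and> s' = set_dis s a (-1) then \<gamma> (grp a) else 0)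
   + (\<Sum>a<n. \<Sum>b<n. if a \<noteq> b \<and> s' = upd_edge s a b True
                        then lam * \<rho> (grp a) (grp b) / real n else 0)
   + (\<Sum>a<n. \<Sum>b<n. if a \<noteq> b \<and> s' = upd_edge s a b False
                        then lam * (1 - \<rho> (grp a) (grp b) / real n) else 0)"

definition generator ::
  "nat \<Rightarrow> nat \<Rightarrow> (nat \<Rightarrow> nat) \<Rightarrow> (nat \<Rightarrow> nat \<Rightarrow> real) \<Rightarrow> (nat \<Rightarrow> nat \<Rightarrow> real)
   \<Rightarrow> (nat \<Rightarrow> real) \<Rightarrow> real \<Rightarrow> state \<Rightarrow> state \<Rightarrow> real" where
  "generator n m grp B \<rho> \<gamma> lam s s' =
     (if s = s' then - (\<Sum>s''\<in>valid_states n - {s}. trans_rate n m grp B \<rho> \<gamma> lam s s'')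
      else trans_rate n m grp B \<rho> \<gamma> lam s s')"

fun mat_pow :: "state set \<Rightarrow> (state \<Rightarrow> state \<Rightarrow> real) \<Rightarrow> nat \<Rightarrow> state \<Rightarrow> state \<Rightarrow> real" where
  "mat_pow S Q 0 s s' = (if s = s' then 1 else 0)"
| "mat_pow S Q (Suc k) s s' = (\<Sum>r\<in>S. mat_pow S Q k s r * Q r s')"

definition trans_prob :: "state set \<Rightarrow> (state \<Rightarrow> state \<Rightarrow> real) \<Rightarrow> real \<Rightarrow> state \<Rightarrow> state \<Rightarrow> real" where
  "trans_prob S Q t s s' = (\<Sum>k. t ^ k / fact k * mat_pow S Q k s s')"

definition is_ctmc ::
  "'w measure \<Rightarrow> state set \<Rightarrow> (state \<Rightarrow> state \<Rightarrow> real) \<Rightarrow> state \<Rightarrow> (real \<Rightarrow> 'w \<Rightarrow> state) \<Rightarrow> bool" where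
  "is_ctmc M S Q x0 X \<longleftrightarrow>
     x0 \<in> S
   \<and> (\<forall>t\<ge>0. \<forall>s. {\<omega>\<in>space M. X t \<omega> = s} \<in> sets M)
   \<and> (\<forall>\<omega>\<in>space M. \<forall>t\<ge>0. X t \<omega> \<in> S)
   \<and> (\<forall>\<omega>\<in>space M. \<forall>t\<ge>0. \<exists>\<delta>>0. \<forall>u. t \<le> u \<and> u < t + \<delta> \<longrightarrow> X u \<omega> = X t \<omega>)
   \<and> (\<forall>k (ts :: nat \<Rightarrow> real) (ss :: nat \<Rightarrow> state).
        (\<forall>i<k. 0 \<le> ts i \<and> ss i \<in> S) \<and> (\<forall>i. Suc i < k \<longrightarrow> ts i \<le> ts (Suc i)) \<longrightarrow>
        measure M {\<omega>\<in>space M. \<forall>i<k. X (ts i) \<omega> = ss i}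
          = (\<Prod>i<k. trans_prob S Q (ts i - (if i = 0 then 0 else ts (i - 1)))
                       (if i = 0 then x0 else ss (i - 1)) (ss i)))"

text \<open>T: t minus the time of the last update of the edge state of (a,b) during [0,t]
  (updates are exactly the flips of the auxiliary bit); T = t if there is no update.\<close>
definition last_update_T :: "(real \<Rightarrow> state) \<Rightarrow> nat \<Rightarrow> nat \<Rightarrow> real \<Rightarrow> real" where
  "last_update_T p a b t =
     t - Inf {s. 0 \<le> s \<and> s \<le> t \<and> (\<forall>\<tau>. s \<le> \<tau> \<and> \<tau> \<le> t \<longrightarrow> aux (p \<tau>) (a,b) = aux (p t) (a,b))}"

definition first_infection :: "(real \<Rightarrow> state) \<Rightarrow> nat \<Rightarrow> ereal" where
  "first_infection p b = Inf {ereal \<tau> | \<tau>. 0 \<le> \<tau> \<and> dis (p \<tau>) b = 1}"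

definition K_var :: "(real \<Rightarrow> state) \<Rightarrow> nat \<Rightarrow> real \<Rightarrow> real" where
  "K_var p b t = t - real_of_ereal (min (ereal t) (first_infection p b))"

end

(* Until b is infected, the link (a,b) -- its edge state together with the auxiliary bit
   that records its updates -- has no influence on the rest of the system: the edge state
   1_{(a,b)} enters only the infection rate of a, and only while b is infected. Collapsing
   the state to b's disease state as soon as b is infected, and forgetting the link before
   that, gives a map rest such that the generator, summed over the fibres of (rest, link),
   is the Kronecker sum of a generator for rest and the autonomous generator of the link.
   Hence exp(t Q) factors over these fibres, so do all cylinder probabilities of the chain,
   and the sigma-algebras generated by rest(X) and by link(X) are independent. K only
   depends on the infection time of b, which rest(X) records, while T and 1_{(a,b)}(t) only
   depend on link(X). Right-continuity of the paths turns the infima defining K and T into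
   infima over rational times, which gives measurability. *)

theory Submission
  imports Defs
begin

section \<open>Matrix exponentials and Kronecker sums\<close>

fun mat_power :: "'a set \<Rightarrow> ('a \<Rightarrow> 'a \<Rightarrow> real) \<Rightarrow> nat \<Rightarrow> 'a \<Rightarrow> 'a \<Rightarrow> real" where
  "mat_power S Q 0 s s' = (if s = s' then 1 else 0)"
| "mat_power S Q (Suc k) s s' = (\<Sum>r\<in>S. mat_power S Q k s r * Q r s')"

definition mat_exp :: "'a set \<Rightarrow> ('a \<Rightarrow> 'a \<Rightarrow> real) \<Rightarrow> real \<Rightarrow> 'a \<Rightarrow> 'a \<Rightarrow> real" where
  "mat_exp S Q t s s' = (\<Sum>k. t ^ k / fact k * mat_power S Q k s s')"

lemma mat_pow_eq_mat_power: "mat_pow S Q k s s' = mat_power S Q k s s'"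
  by (induction k arbitrary: s') auto

lemma trans_prob_eq_mat_exp: "trans_prob S Q t s s' = mat_exp S Q t s s'"
  unfolding trans_prob_def mat_exp_def mat_pow_eq_mat_power ..

lemma abs_mat_power_le:
  assumes "finite S" "s' \<in> S"
  shows "\<bar>mat_power S Q k s s'\<bar> \<le> (1 + (\<Sum>r\<in>S. \<Sum>r'\<in>S. \<bar>Q r r'\<bar>)) ^ k"
proof -
  define c where "c = 1 + (\<Sum>r\<in>S. \<Sum>r'\<in>S. \<bar>Q r r'\<bar>)"
  have column: "(\<Sum>r\<in>S. \<bar>Q r s'\<bar>) \<le> c" if "s' \<in> S" for s'
  proof -
    have "(\<Sum>r\<in>S. \<bar>Q r s'\<bar>) \<le> (\<Sum>r\<in>S. \<Sum>r'\<in>S. \<bar>Q r r'\<bar>)"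
      using assms(1) that by (intro sum_mono member_le_sum) auto
    then show ?thesis unfolding c_def by simp
  qed
  have c_nonneg: "0 \<le> c" unfolding c_def by (simp add: sum_nonneg)
  have "\<bar>mat_power S Q k s s'\<bar> \<le> c ^ k" using assms(2)
  proof (induction k arbitrary: s')
    case (Suc k)
    have "\<bar>mat_power S Q (Suc k) s s'\<bar> \<le> (\<Sum>r\<in>S. \<bar>mat_power S Q k s r\<bar> * \<bar>Q r s'\<bar>)"
      by (simp add: abs_mult order.trans[OF sum_abs])
    also have "\<dots> \<le> (\<Sum>r\<in>S. c ^ k * \<bar>Q r s'\<bar>)"
      using Suc.IH by (intro sum_mono mult_right_mono) auto
    also have "\<dots> = c ^ k * (\<Sum>r\<in>S. \<bar>Q r s'\<bar>)"
      by (simp add: sum_distrib_left)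
    also have "\<dots> \<le> c ^ k * c"
      using column[OF Suc.prems] c_nonneg by (intro mult_left_mono) auto
    finally show ?case by (simp add: mult.commute)
  qed simp
  then show ?thesis unfolding c_def .
qed

lemma summable_mat_exp_series:
  assumes "finite S" "s' \<in> S"
  shows "summable (\<lambda>k. norm (t ^ k / fact k * mat_power S Q k s s'))"
proof (rule summable_comparison_test[OF _ summable_exp])
  define c where "c = 1 + (\<Sum>r\<in>S. \<Sum>r'\<in>S. \<bar>Q r r'\<bar>)"
  have "norm (norm (t ^ k / fact k * mat_power S Q k s s'))
      \<le> inverse (fact k) * (\<bar>t\<bar> * c) ^ k" for k
  proof -
    have "norm (norm (t ^ k / fact k * mat_power S Q k s s'))
        = \<bar>t\<bar> ^ k / fact k * \<bar>mat_power S Q k s s'\<bar>"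
      by (simp add: abs_mult power_abs)
    also have "\<dots> \<le> \<bar>t\<bar> ^ k / fact k * c ^ k"
      unfolding c_def using abs_mat_power_le[OF assms] by (intro mult_left_mono) auto
    finally show ?thesis by (simp add: field_simps)
  qed
  then show "\<exists>N. \<forall>k\<ge>N. norm (norm (t ^ k / fact k * mat_power S Q k s s'))
      \<le> inverse (fact k) * (\<bar>t\<bar> * c) ^ k" by blast
qed

definition lumps_to_kronecker_sum ::
  "'a set \<Rightarrow> ('a \<Rightarrow> 'a \<Rightarrow> real) \<Rightarrow> ('a \<Rightarrow> 'b) \<Rightarrow> ('a \<Rightarrow> 'c)
   \<Rightarrow> ('b \<Rightarrow> 'b \<Rightarrow> real) \<Rightarrow> ('c \<Rightarrow> 'c \<Rightarrow> real) \<Rightarrow> bool" where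
  "lumps_to_kronecker_sum S Q \<phi> \<zeta> QV QZ \<longleftrightarrow>
     (\<forall>r\<in>S. \<forall>v z. (\<Sum>y\<in>{y\<in>S. \<phi> y = v \<and> \<zeta> y = z}. Q r y)
        = (if \<zeta> r = z then QV (\<phi> r) v else 0) + (if \<phi> r = v then QZ (\<zeta> r) z else 0))"

definition lumps_to_product ::
  "'a set \<Rightarrow> ('a \<Rightarrow> 'a \<Rightarrow> real) \<Rightarrow> ('a \<Rightarrow> 'b) \<Rightarrow> ('a \<Rightarrow> 'c)
   \<Rightarrow> ('b \<Rightarrow> 'b \<Rightarrow> real) \<Rightarrow> ('c \<Rightarrow> 'c \<Rightarrow> real) \<Rightarrow> bool" where
  "lumps_to_product S P \<phi> \<zeta> PV PZ \<longleftrightarrow>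
     (\<forall>x\<in>S. \<forall>v\<in>\<phi> ` S. \<forall>z. (\<Sum>y\<in>{y\<in>S. \<phi> y = v \<and> \<zeta> y = z}. P x y) = PV (\<phi> x) v * PZ (\<zeta> x) z)"

lemma sum_binomial_Suc:
  fixes c :: "nat \<Rightarrow> nat \<Rightarrow> real"
  shows "(\<Sum>i\<le>Suc k. real (Suc k choose i) * c i (Suc k - i))
       = (\<Sum>i\<le>k. real (k choose i) * (c (Suc i) (k - i) + c i (Suc k - i)))"
proof -
  have "(\<Sum>i\<le>Suc k. real (Suc k choose i) * c i (Suc k - i))
      = c 0 (Suc k) + (\<Sum>j\<le>k. real (k choose j) * c (Suc j) (k - j))
          + (\<Sum>j\<le>k. real (k choose Suc j) * c (Suc j) (k - j))"
    by (subst sum.atMost_Suc_shift) (simp add: sum.distrib algebra_simps)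
  moreover have "c 0 (Suc k) + (\<Sum>j\<le>k. real (k choose Suc j) * c (Suc j) (k - j))
      = (\<Sum>i\<le>Suc k. real (k choose i) * c i (Suc k - i))"
    by (subst sum.atMost_Suc_shift) simp
  moreover have "(\<Sum>i\<le>Suc k. real (k choose i) * c i (Suc k - i))
      = (\<Sum>i\<le>k. real (k choose i) * c i (Suc k - i))"
    by simp
  ultimately show ?thesis by (simp add: sum.distrib algebra_simps)
qed

lemma sum_by_fibres:
  fixes \<zeta> :: "'a \<Rightarrow> 'c::finite"
  assumes "finite S"
  shows "(\<Sum>r\<in>S. h r) = (\<Sum>v\<in>\<phi> ` S. \<Sum>z\<in>UNIV. \<Sum>r\<in>{r\<in>S. \<phi> r = v \<and> \<zeta> r = z}. h r)"
proof -
  have "(\<Sum>r\<in>S. h r) = (\<Sum>v\<in>\<phi> ` S. \<Sum>r\<in>{r\<in>S. \<phi> r = v}. h r)"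
    using assms by (rule sum.image_gen)
  also have "\<dots> = (\<Sum>v\<in>\<phi> ` S. \<Sum>z\<in>UNIV. \<Sum>r\<in>{r\<in>S. \<phi> r = v \<and> \<zeta> r = z}. h r)"
  proof (rule sum.cong[OF refl])
    fix v
    have "(\<Sum>r\<in>{r\<in>S. \<phi> r = v}. h r)
        = (\<Sum>z\<in>\<zeta> ` {r\<in>S. \<phi> r = v}. \<Sum>r\<in>{r\<in>S. \<phi> r = v \<and> \<zeta> r = z}. h r)"
      using assms by (subst sum.image_gen[where g = \<zeta>]) (auto intro!: sum.cong)
    also have "\<dots> = (\<Sum>z\<in>UNIV. \<Sum>r\<in>{r\<in>S. \<phi> r = v \<and> \<zeta> r = z}. h r)"
      by (rule sum.mono_neutral_left) (auto intro!: sum.neutral intro: rev_image_eqI)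
    finally show "(\<Sum>r\<in>{r\<in>S. \<phi> r = v}. h r) = \<dots>" .
  qed
  finally show ?thesis .
qed

lemma sum_kronecker_sum:
  fixes A :: "'b \<Rightarrow> real" and C :: "'c::finite \<Rightarrow> real"
  assumes "finite V" "v \<in> V"
  shows "(\<Sum>v'\<in>V. \<Sum>z'\<in>UNIV. A v' * C z'
            * ((if z' = z then QV v' v else 0) + (if v' = v then QZ z' z else 0)))
       = (\<Sum>v'\<in>V. A v' * QV v' v) * C z + A v * (\<Sum>z'\<in>UNIV. C z' * QZ z' z)"
proof -
  have "(\<Sum>v'\<in>V. \<Sum>z'\<in>UNIV. if z' = z then A v' * C z' * QV v' v else 0)
      = (\<Sum>v'\<in>V. A v' * QV v' v) * C z"
    unfolding sum_distrib_right by (simp add: ac_simps)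
  moreover have "(\<Sum>v'\<in>V. \<Sum>z'\<in>UNIV. if v' = v then A v' * C z' * QZ z' z else 0)
      = A v * (\<Sum>z'\<in>UNIV. C z' * QZ z' z)"
    using assms by (subst sum.swap) (simp add: sum_distrib_left ac_simps)
  ultimately show ?thesis
    by (simp add: distrib_left sum.distrib if_distrib[of "\<lambda>x. _ * x"] sum_distrib_left
        mult.commute mult.left_commute cong: if_cong)
qed

lemma indicator_pair_diff:
  assumes "p' \<noteq> p \<Longrightarrow> q' = q"
  shows "(if p' = v \<and> q' = z then 1 else 0) - (if p = v \<and> q = z then 1 else (0::real))
       = (if q = z then 1 else 0) * ((if p' = v then 1 else 0) - (if p = v then 1 else 0))
         + (if p = v then 1 else 0) * ((if q' = z then 1 else 0) - (if q = z then 1 else 0))"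
  using assms by (cases "p' = p") auto

lemma mat_power_lumped:
  fixes \<phi> :: "'a \<Rightarrow> 'b" and \<zeta> :: "'a \<Rightarrow> 'c::finite"
  assumes fin: "finite S" and lump: "lumps_to_kronecker_sum S Q \<phi> \<zeta> QV QZ"
    and x: "x \<in> S" and v: "v \<in> \<phi> ` S"
  shows "(\<Sum>y\<in>{y\<in>S. \<phi> y = v \<and> \<zeta> y = z}. mat_power S Q k x y)
       = (\<Sum>i\<le>k. real (k choose i)
            * (mat_power (\<phi> ` S) QV i (\<phi> x) v * mat_power UNIV QZ (k - i) (\<zeta> x) z))"
  using v
proof (induction k arbitrary: v z)
  case 0
  then show ?case using fin x by simp
next
  case (Suc k)
  define F where "F v z = {y\<in>S. \<phi> y = v \<and> \<zeta> y = z}" for v z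
  define A where "A i = mat_power (\<phi> ` S) QV i (\<phi> x)" for i
  define C where "C j = mat_power UNIV QZ j (\<zeta> x)" for j
  define K where "K v' z' = (if z' = z then QV v' v else 0) + (if v' = v then QZ z' z else 0)"
    for v' z'
  have "(\<Sum>y\<in>F v z. mat_power S Q (Suc k) x y) = (\<Sum>r\<in>S. mat_power S Q k x r * (\<Sum>y\<in>F v z. Q r y))"
    by (simp only: mat_power.simps) (subst sum.swap, simp add: sum_distrib_left)
  also have "\<dots> = (\<Sum>r\<in>S. mat_power S Q k x r * K (\<phi> r) (\<zeta> r))"
    using lump unfolding lumps_to_kronecker_sum_def F_def K_def by simp
  also have "\<dots> = (\<Sum>v'\<in>\<phi> ` S. \<Sum>z'\<in>UNIV. (\<Sum>r\<in>F v' z'. mat_power S Q k x r) * K v' z')"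
    unfolding F_def
    by (subst sum_by_fibres[OF fin, where \<phi> = \<phi> and \<zeta> = \<zeta>])
      (auto simp: sum_distrib_right intro!: sum.cong)
  also have "\<dots> = (\<Sum>v'\<in>\<phi> ` S. \<Sum>z'\<in>UNIV.
      (\<Sum>i\<le>k. real (k choose i) * (A i v' * C (k - i) z')) * K v' z')"
    using Suc.IH unfolding F_def A_def C_def by (intro sum.cong refl) auto
  also have "\<dots> = (\<Sum>i\<le>k. real (k choose i) * (\<Sum>v'\<in>\<phi> ` S. \<Sum>z'\<in>UNIV. A i v' * C (k - i) z' * K v' z'))"
    unfolding sum_distrib_left sum_distrib_right by (simp add: sum.swap[of _ "{..k}"] ac_simps)
  also have "\<dots> = (\<Sum>i\<le>k. real (k choose i) * (A (Suc i) v * C (k - i) z + A i v * C (Suc k - i) z))"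
  proof (intro sum.cong refl arg_cong[where f = "\<lambda>s. _ * s"])
    fix i assume "i \<in> {..k}"
    then have "Suc k - i = Suc (k - i)" by auto
    then show "(\<Sum>v'\<in>\<phi> ` S. \<Sum>z'\<in>UNIV. A i v' * C (k - i) z' * K v' z')
        = A (Suc i) v * C (k - i) z + A i v * C (Suc k - i) z"
      unfolding K_def using fin Suc.prems by (simp add: sum_kronecker_sum A_def C_def)
  qed
  also have "\<dots> = (\<Sum>i\<le>Suc k. real (Suc k choose i) * (A i v * C (Suc k - i) z))"
    by (rule sum_binomial_Suc[symmetric])
  finally show ?case unfolding F_def A_def C_def .
qed

lemma power_fact_binomial:
  fixes t :: real
  assumes "i \<le> k"
  shows "t ^ k / fact k * real (k choose i) = t ^ i / fact i * (t ^ (k - i) / fact (k - i))"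
proof -
  have "t ^ k = t ^ i * t ^ (k - i)" using assms by (simp add: power_add[symmetric])
  then show ?thesis using assms by (simp add: binomial_fact field_simps)
qed

lemma lumps_to_product_mat_exp:
  fixes \<zeta> :: "'a \<Rightarrow> 'c::finite"
  assumes fin: "finite S" and lump: "lumps_to_kronecker_sum S Q \<phi> \<zeta> QV QZ"
  shows "lumps_to_product S (mat_exp S Q t) \<phi> \<zeta> (mat_exp (\<phi> ` S) QV t) (mat_exp UNIV QZ t)"
  unfolding lumps_to_product_def
proof (intro ballI allI)
  fix x v z assume x: "x \<in> S" and v: "v \<in> \<phi> ` S"
  define F where "F = {y\<in>S. \<phi> y = v \<and> \<zeta> y = z}"
  define \<alpha> where "\<alpha> i = t ^ i / fact i * mat_power (\<phi> ` S) QV i (\<phi> x) v" for i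
  define \<beta> where "\<beta> j = t ^ j / fact j * mat_power UNIV QZ j (\<zeta> x) z" for j
  have "(\<Sum>y\<in>F. mat_exp S Q t x y) = (\<Sum>k. \<Sum>y\<in>F. t ^ k / fact k * mat_power S Q k x y)"
    unfolding mat_exp_def F_def
    by (rule suminf_sum[symmetric])
      (rule summable_norm_cancel[OF summable_mat_exp_series[OF fin]], simp)
  also have "\<dots> = (\<Sum>k. \<Sum>i\<le>k. \<alpha> i * \<beta> (k - i))"
  proof (rule suminf_cong)
    fix k
    have "(\<Sum>y\<in>F. t ^ k / fact k * mat_power S Q k x y)
        = t ^ k / fact k * (\<Sum>y\<in>F. mat_power S Q k x y)"
      by (simp add: sum_distrib_left)
    also have "\<dots> = (\<Sum>i\<le>k. (t ^ k / fact k * real (k choose i))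
        * (mat_power (\<phi> ` S) QV i (\<phi> x) v * mat_power UNIV QZ (k - i) (\<zeta> x) z))"
      unfolding F_def mat_power_lumped[OF fin lump x v] sum_distrib_left by (simp only: mult.assoc)
    also have "\<dots> = (\<Sum>i\<le>k. \<alpha> i * \<beta> (k - i))"
    proof (rule sum.cong[OF refl])
      fix i assume "i \<in> {..k}"
      then have "t ^ k / fact k * real (k choose i) = t ^ i / fact i * (t ^ (k - i) / fact (k - i))"
        by (intro power_fact_binomial) simp
      then show "(t ^ k / fact k * real (k choose i))
          * (mat_power (\<phi> ` S) QV i (\<phi> x) v * mat_power UNIV QZ (k - i) (\<zeta> x) z)
          = \<alpha> i * \<beta> (k - i)"
        unfolding \<alpha>_def \<beta>_def by (simp only: mult_ac)
    qed
    finally show "(\<Sum>y\<in>F. t ^ k / fact k * mat_power S Q k x y) = (\<Sum>i\<le>k. \<alpha> i * \<beta> (k - i))" .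
  qed
  also have "\<dots> = suminf \<alpha> * suminf \<beta>"
    unfolding \<alpha>_def \<beta>_def using fin v
    by (intro Cauchy_product[symmetric] summable_mat_exp_series) auto
  finally show "(\<Sum>y\<in>{y\<in>S. \<phi> y = v \<and> \<zeta> y = z}. mat_exp S Q t x y)
      = mat_exp (\<phi> ` S) QV t (\<phi> x) v * mat_exp UNIV QZ t (\<zeta> x) z"
    unfolding F_def \<alpha>_def \<beta>_def mat_exp_def .
qed

section \<open>Path weights\<close>

fun path_weight ::
  "'a set \<Rightarrow> (nat \<Rightarrow> 'a \<Rightarrow> 'a \<Rightarrow> real) \<Rightarrow> (nat \<Rightarrow> 'a set) \<Rightarrow> 'a \<Rightarrow> nat \<Rightarrow> 'a \<Rightarrow> real" where
  "path_weight S P E x0 0 y = (if y = x0 then 1 else 0)"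
| "path_weight S P E x0 (Suc k) y =
     (if y \<in> E k then (\<Sum>x\<in>S. path_weight S P E x0 k x * P k x y) else 0)"

definition path_end :: "'a \<Rightarrow> nat \<Rightarrow> (nat \<Rightarrow> 'a) \<Rightarrow> 'a" where
  "path_end x0 N ss = (if N = 0 then x0 else ss (N - 1))"

lemma path_end_in:
  assumes "x0 \<in> S" "ss \<in> Pi\<^sub>E {..<N} (\<lambda>i. S \<inter> E i)"
  shows "path_end x0 N ss \<in> S"
  using assms unfolding path_end_def by (cases N) auto

lemma sum_PiE_lessThan_Suc:
  "(\<Sum>ss\<in>Pi\<^sub>E {..<Suc N} F. f ss) = (\<Sum>(u, g)\<in>F N \<times> Pi\<^sub>E {..<N} F. f (g(N := u)))"
proof -
  have paths_Suc: "Pi\<^sub>E {..<Suc N} F = (\<lambda>(u, g). g(N := u)) ` (F N \<times> Pi\<^sub>E {..<N} F)"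
    using PiE_insert_eq[of N "{..<N}" F] by (simp add: lessThan_Suc)
  have inj: "inj_on (\<lambda>(u, g). g(N := u)) (F N \<times> Pi\<^sub>E {..<N} F)"
    by (rule inj_combinator) simp
  show ?thesis unfolding paths_Suc sum.reindex[OF inj] by (intro sum.cong refl) auto
qed

lemma sum_paths_ending_at:
  assumes fin: "finite S" and x0: "x0 \<in> S" and y: "y \<in> S"
  shows "(\<Sum>ss\<in>Pi\<^sub>E {..<N} (\<lambda>i. S \<inter> E i).
            (\<Prod>i<N. P i (if i = 0 then x0 else ss (i - 1)) (ss i))
            * (if path_end x0 N ss = y then 1 else 0))
         = path_weight S P E x0 N y"
  using y
proof (induction N arbitrary: y)
  case 0
  then show ?case by (simp add: path_end_def)
next
  case (Suc N)
  define F where "F = (\<lambda>i. S \<inter> E i)"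
  define w where "w ss = (\<Prod>i<N. P i (if i = 0 then x0 else ss (i - 1)) (ss i))" for ss
  have w_Suc: "(\<Prod>i<Suc N. P i (if i = 0 then x0 else (g(N := u)) (i - 1)) ((g(N := u)) i))
      = w g * P N (path_end x0 N g) u" for g u
  proof -
    have "(\<Prod>i<N. P i (if i = 0 then x0 else (g(N := u)) (i - 1)) ((g(N := u)) i)) = w g"
      unfolding w_def by (intro prod.cong refl) auto
    then show ?thesis by (cases N) (simp_all add: path_end_def)
  qed
  have "(\<Sum>ss\<in>Pi\<^sub>E {..<Suc N} F. (\<Prod>i<Suc N. P i (if i = 0 then x0 else ss (i - 1)) (ss i))
          * (if path_end x0 (Suc N) ss = y then 1 else 0))
      = (\<Sum>(u, g)\<in>F N \<times> Pi\<^sub>E {..<N} F. w g * P N (path_end x0 N g) u * (if u = y then 1 else 0))"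
    unfolding sum_PiE_lessThan_Suc
    by (intro sum.cong refl) (clarsimp simp only: case_prod_conv w_Suc, simp add: path_end_def)
  also have "\<dots> = (\<Sum>u\<in>F N. if u = y then (\<Sum>g\<in>Pi\<^sub>E {..<N} F. w g * P N (path_end x0 N g) y) else 0)"
    unfolding sum.cartesian_product[symmetric]
    by (intro sum.cong refl) (auto simp: sum_distrib_right[symmetric])
  also have "\<dots> = (if y \<in> E N then (\<Sum>g\<in>Pi\<^sub>E {..<N} F. w g * P N (path_end x0 N g) y) else 0)"
    using fin Suc.prems unfolding F_def by simp
  also have "\<dots> = path_weight S P E x0 (Suc N) y"
  proof -
    have "(\<Sum>x\<in>S. path_weight S P E x0 N x * P N x y)
        = (\<Sum>x\<in>S. (\<Sum>g\<in>Pi\<^sub>E {..<N} F. w g * (if path_end x0 N g = x then 1 else 0)) * P N x y)"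
      using Suc.IH unfolding w_def F_def by simp
    also have "\<dots> = (\<Sum>g\<in>Pi\<^sub>E {..<N} F. \<Sum>x\<in>S. w g * (if path_end x0 N g = x then P N x y else 0))"
      unfolding sum_distrib_right by (subst sum.swap) (intro sum.cong refl, simp)
    also have "\<dots> = (\<Sum>g\<in>Pi\<^sub>E {..<N} F. w g * P N (path_end x0 N g) y)"
      using fin path_end_in[OF x0] unfolding F_def
      by (intro sum.cong refl) (simp add: sum_distrib_left[symmetric])
    finally show ?thesis by simp
  qed
  finally show ?case unfolding F_def .
qed

lemma sum_paths_eq_path_weight:
  assumes fin: "finite S" and x0: "x0 \<in> S"
  shows "(\<Sum>ss\<in>Pi\<^sub>E {..<N} (\<lambda>i. S \<inter> E i). \<Prod>i<N. P i (if i = 0 then x0 else ss (i - 1)) (ss i))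
         = (\<Sum>y\<in>S. path_weight S P E x0 N y)"
proof -
  have "(\<Sum>y\<in>S. path_weight S P E x0 N y) = (\<Sum>y\<in>S. \<Sum>ss\<in>Pi\<^sub>E {..<N} (\<lambda>i. S \<inter> E i).
            (\<Prod>i<N. P i (if i = 0 then x0 else ss (i - 1)) (ss i))
            * (if path_end x0 N ss = y then 1 else 0))"
    using sum_paths_ending_at[OF fin x0] by simp
  also have "\<dots> = (\<Sum>ss\<in>Pi\<^sub>E {..<N} (\<lambda>i. S \<inter> E i). \<Prod>i<N. P i (if i = 0 then x0 else ss (i - 1)) (ss i))"
    using fin path_end_in[OF x0]
    by (subst sum.swap) (intro sum.cong refl, simp add: sum_distrib_left[symmetric])
  finally show ?thesis ..
qed

lemma path_weight_lumped:
  fixes \<zeta> :: "'a \<Rightarrow> 'c::finite"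
  assumes fin: "finite S" and x0: "x0 \<in> S"
    and lump: "\<And>k. lumps_to_product S (P k) \<phi> \<zeta> (PV k) (PZ k)"
    and v: "v \<in> \<phi> ` S"
  shows "(\<Sum>y\<in>{y\<in>S. \<phi> y = v \<and> \<zeta> y = z}. path_weight S P (\<lambda>k. {y. \<phi> y \<in> A k \<and> \<zeta> y \<in> C k}) x0 N y)
       = path_weight (\<phi> ` S) PV A (\<phi> x0) N v * path_weight UNIV PZ C (\<zeta> x0) N z"
  using v
proof (induction N arbitrary: v z)
  case 0
  then show ?case using fin x0 by simp
next
  case (Suc N)
  define E where "E = (\<lambda>k. {y. \<phi> y \<in> A k \<and> \<zeta> y \<in> C k})"
  define H where "H = path_weight S P E x0 N"
  define HV where "HV = path_weight (\<phi> ` S) PV A (\<phi> x0) N"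
  define HZ where "HZ = path_weight UNIV PZ C (\<zeta> x0) N"
  define F where "F v z = {y\<in>S. \<phi> y = v \<and> \<zeta> y = z}" for v z
  have "(\<Sum>y\<in>F v z. path_weight S P E x0 (Suc N) y)
      = (if v \<in> A N \<and> z \<in> C N then (\<Sum>x\<in>S. H x * (\<Sum>y\<in>F v z. P N x y)) else 0)"
    unfolding F_def E_def H_def
    by (cases "v \<in> A N \<and> z \<in> C N") (auto simp: sum_distrib_left sum.swap[of _ S])
  also have "(\<Sum>x\<in>S. H x * (\<Sum>y\<in>F v z. P N x y)) = (\<Sum>x\<in>S. H x * (PV N (\<phi> x) v * PZ N (\<zeta> x) z))"
    using lump[of N] Suc.prems unfolding F_def lumps_to_product_def
    by (intro sum.cong refl arg_cong[where f = "\<lambda>s. _ * s"]) blast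
  also have "\<dots> = (\<Sum>v'\<in>\<phi> ` S. \<Sum>z'\<in>UNIV. (\<Sum>x\<in>F v' z'. H x) * (PV N v' v * PZ N z' z))"
    unfolding F_def by (subst sum_by_fibres[OF fin, where \<phi> = \<phi> and \<zeta> = \<zeta>])
      (auto simp: sum_distrib_right intro!: sum.cong)
  also have "\<dots> = (\<Sum>v'\<in>\<phi> ` S. \<Sum>z'\<in>UNIV. (HV v' * HZ z') * (PV N v' v * PZ N z' z))"
    using Suc.IH unfolding F_def H_def HV_def HZ_def E_def by (intro sum.cong refl) auto
  also have "\<dots> = (\<Sum>v'\<in>\<phi> ` S. HV v' * PV N v' v) * (\<Sum>z'\<in>UNIV. HZ z' * PZ N z' z)"
    unfolding sum_product by (intro sum.cong refl) (simp only: ac_simps)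
  finally show ?case
    unfolding F_def E_def HV_def HZ_def by simp
qed

lemma sum_path_weight_lumped:
  fixes \<zeta> :: "'a \<Rightarrow> 'c::finite"
  assumes fin: "finite S" and x0: "x0 \<in> S"
    and lump: "\<And>k. lumps_to_product S (P k) \<phi> \<zeta> (PV k) (PZ k)"
  shows "(\<Sum>y\<in>S. path_weight S P (\<lambda>k. {y. \<phi> y \<in> A k \<and> \<zeta> y \<in> C k}) x0 N y)
       = (\<Sum>v\<in>\<phi> ` S. path_weight (\<phi> ` S) PV A (\<phi> x0) N v)
         * (\<Sum>z\<in>UNIV. path_weight UNIV PZ C (\<zeta> x0) N z)"
  by (subst sum_by_fibres[OF fin, where \<phi> = \<phi> and \<zeta> = \<zeta>])
     (simp add: path_weight_lumped[OF fin x0 lump] sum_product)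

section \<open>Right-locally-constant paths\<close>

definition right_locally_constant :: "(real \<Rightarrow> 'a) \<Rightarrow> bool" where
  "right_locally_constant p \<longleftrightarrow> (\<forall>\<tau>\<ge>0. \<exists>\<delta>>0. \<forall>u. \<tau> \<le> u \<and> u < \<tau> + \<delta> \<longrightarrow> p u = p \<tau>)"

lemma right_locally_constant_comp:
  "right_locally_constant p \<Longrightarrow> right_locally_constant (\<lambda>\<tau>. f (p \<tau>))"
  unfolding right_locally_constant_def by metis

lemma first_hitting_time_eq_INF_rationals:
  fixes p :: "real \<Rightarrow> 'x"
  assumes rc: "right_locally_constant p"
  shows "Inf {ereal \<tau> | \<tau>. 0 \<le> \<tau> \<and> P (p \<tau>)} = (INF q\<in>{q\<in>\<rat>. 0 \<le> q}. if P (p q) then ereal q else \<infinity>)"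
proof (rule antisym)
  show "Inf {ereal \<tau> | \<tau>. 0 \<le> \<tau> \<and> P (p \<tau>)} \<le> (INF q\<in>{q\<in>\<rat>. 0 \<le> q}. if P (p q) then ereal q else \<infinity>)"
  proof (rule INF_greatest)
    fix q :: real assume q: "q \<in> {q\<in>\<rat>. 0 \<le> q}"
    show "Inf {ereal \<tau> | \<tau>. 0 \<le> \<tau> \<and> P (p \<tau>)} \<le> (if P (p q) then ereal q else \<infinity>)"
      using q by (auto intro!: Inf_lower)
  qed
next
  show "(INF q\<in>{q\<in>\<rat>. 0 \<le> q}. if P (p q) then ereal q else \<infinity>) \<le> Inf {ereal \<tau> | \<tau>. 0 \<le> \<tau> \<and> P (p \<tau>)}"
  proof (rule Inf_greatest)
    fix x assume "x \<in> {ereal \<tau> | \<tau>. 0 \<le> \<tau> \<and> P (p \<tau>)}"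
    then obtain \<tau> where x: "x = ereal \<tau>" and \<tau>: "0 \<le> \<tau>" "P (p \<tau>)" by auto
    obtain \<delta> where \<delta>: "\<delta> > 0" "\<forall>u. \<tau> \<le> u \<and> u < \<tau> + \<delta> \<longrightarrow> p u = p \<tau>"
      using rc \<tau> unfolding right_locally_constant_def by blast
    show "(INF q\<in>{q\<in>\<rat>. 0 \<le> q}. if P (p q) then ereal q else \<infinity>) \<le> x"
      unfolding x
    proof (rule ereal_le_epsilon2)
      fix e :: real assume "0 < e"
      then have "\<tau> < \<tau> + min \<delta> e" using \<delta>(1) by simp
      then obtain q where q: "q \<in> \<rat>" "\<tau> < q" "q < \<tau> + min \<delta> e"
        using Rats_dense_in_real by blast
      have "\<tau> \<le> q \<and> q < \<tau> + \<delta>" using q by auto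
      then have pq: "p q = p \<tau>" by (rule \<delta>(2)[rule_format])
      have "(INF q\<in>{q\<in>\<rat>. 0 \<le> q}. if P (p q) then ereal q else \<infinity>) \<le> (if P (p q) then ereal q else \<infinity>)"
        using q \<tau> by (intro INF_lower) auto
      also have "\<dots> = ereal q" using pq \<tau> by simp
      also have "\<dots> \<le> ereal \<tau> + ereal e" using q by simp
      finally show "(INF q\<in>{q\<in>\<rat>. 0 \<le> q}. if P (p q) then ereal q else \<infinity>) \<le> ereal \<tau> + ereal e" .
    qed
  qed
qed

lemma constant_if_constant_on_rationals:
  fixes g :: "real \<Rightarrow> 'y"
  assumes rc: "right_locally_constant g"
    and q: "0 \<le> q" and const: "\<forall>\<tau>\<in>{\<tau>\<in>\<rat>. q \<le> \<tau> \<and> \<tau> \<le> t}. g \<tau> = g t"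
    and \<tau>: "q \<le> \<tau>" "\<tau> \<le> t"
  shows "g \<tau> = g t"
proof (rule ccontr)
  assume ne: "g \<tau> \<noteq> g t"
  then have "\<tau> < t" using \<tau> by (cases "\<tau> = t") auto
  have "0 \<le> \<tau>" using q \<tau> by linarith
  then obtain \<delta> where \<delta>: "\<delta> > 0" "\<forall>u. \<tau> \<le> u \<and> u < \<tau> + \<delta> \<longrightarrow> g u = g \<tau>"
    using rc unfolding right_locally_constant_def by blast
  have "\<tau> < min (\<tau> + \<delta>) t" using \<delta>(1) \<open>\<tau> < t\<close> by simp
  then obtain r where r: "r \<in> \<rat>" "\<tau> < r" "r < min (\<tau> + \<delta>) t"
    using Rats_dense_in_real by blast
  then have "g r = g \<tau>" using \<delta>(2)[rule_format, of r] by simp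
  moreover have "g r = g t" using const r \<tau> by auto
  ultimately show False using ne by simp
qed

text \<open>The time t is added to the rational candidates because the final interval of constancy
  may be the single point t.\<close>

lemma Inf_final_constancy_less_iff:
  fixes g :: "real \<Rightarrow> 'y"
  assumes t: "t \<ge> 0"
    and rc: "right_locally_constant g"
  shows "Inf {s. 0 \<le> s \<and> s \<le> t \<and> (\<forall>\<tau>. s \<le> \<tau> \<and> \<tau> \<le> t \<longrightarrow> g \<tau> = g t)} < r
     \<longleftrightarrow> (\<exists>q\<in>insert t {q\<in>\<rat>. 0 \<le> q \<and> q \<le> t}. q < r \<and> (\<forall>\<tau>\<in>{\<tau>\<in>\<rat>. q \<le> \<tau> \<and> \<tau> \<le> t}. g \<tau> = g t))"
proof -
  let ?W = "{s. 0 \<le> s \<and> s \<le> t \<and> (\<forall>\<tau>. s \<le> \<tau> \<and> \<tau> \<le> t \<longrightarrow> g \<tau> = g t)}"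
  let ?D = "insert t {q\<in>\<rat>. 0 \<le> q \<and> q \<le> t}"
  let ?C = "\<lambda>q. \<forall>\<tau>\<in>{\<tau>\<in>\<rat>. q \<le> \<tau> \<and> \<tau> \<le> t}. g \<tau> = g t"
  have t_in: "t \<in> ?W" using t by (auto intro: order_antisym)
  have W_iff: "q \<in> ?W \<longleftrightarrow> 0 \<le> q \<and> q \<le> t \<and> ?C q" for q
  proof
    assume "0 \<le> q \<and> q \<le> t \<and> ?C q"
    then show "q \<in> ?W" using constant_if_constant_on_rationals[OF rc, of q t] by blast
  qed blast
  have "bdd_below ?W" by (rule bdd_belowI[of _ 0]) blast
  then have "Inf ?W < r \<longleftrightarrow> (\<exists>s\<in>?W. s < r)"
    using t_in by (intro cInf_less_iff) blast
  also have "\<dots> \<longleftrightarrow> (\<exists>q\<in>?D. q < r \<and> q \<in> ?W)"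
  proof
    assume "\<exists>s\<in>?W. s < r"
    then obtain s where s: "s \<in> ?W" "s < r" by blast
    then have s_nonneg: "0 \<le> s" and s_const: "\<forall>\<tau>. s \<le> \<tau> \<and> \<tau> \<le> t \<longrightarrow> g \<tau> = g t"
      by blast+
    show "\<exists>q\<in>?D. q < r \<and> q \<in> ?W"
    proof (cases "s < t")
      case True
      then have "s < min r t" using s by simp
      then obtain q where q: "q \<in> \<rat>" "s < q" "q < min r t"
        using Rats_dense_in_real by blast
      have "\<forall>\<tau>. q \<le> \<tau> \<and> \<tau> \<le> t \<longrightarrow> g \<tau> = g t"
        using s_const q(2) by (meson less_le_trans less_imp_le)
      moreover have "0 \<le> q" "q \<le> t" "q < r" using s_nonneg q by linarith+
      ultimately show ?thesis using q(1) by blast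
    next
      case False
      then have "t < r" using s(2) by linarith
      then show ?thesis using t_in by blast
    qed
  qed blast
  also have "\<dots> \<longleftrightarrow> (\<exists>q\<in>?D. q < r \<and> ?C q)"
    using W_iff t by blast
  finally show ?thesis .
qed

section \<open>Events of the epidemic model\<close>

lemma state_eq_iff: "x = y \<longleftrightarrow> dis x = dis y \<and> edge x = edge y \<and> aux x = aux y"
  unfolding dis_def edge_def aux_def by (auto simp: prod_eq_iff)

lemma dis_set_dis [simp]: "dis (set_dis x c v) = (dis x)(c := v)"
  and edge_set_dis [simp]: "edge (set_dis x c v) = edge x"
  and aux_set_dis [simp]: "aux (set_dis x c v) = aux x"
  unfolding set_dis_def dis_def edge_def aux_def by auto

lemma dis_upd_edge [simp]: "dis (upd_edge x c d w) = dis x"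
  and edge_upd_edge [simp]: "edge (upd_edge x c d w) = (edge x)((c, d) := w)"
  and aux_upd_edge [simp]: "aux (upd_edge x c d w) = (aux x)((c, d) := \<not> aux x (c, d))"
  unfolding upd_edge_def dis_def edge_def aux_def by auto

lemma dis_triple [simp]: "dis (f, g, h) = f"
  and edge_triple [simp]: "edge (f, g, h) = g"
  and aux_triple [simp]: "aux (f, g, h) = h"
  unfolding dis_def edge_def aux_def by auto

lemma finite_valid_states: "finite (valid_states n)"
proof -
  define P where "P = {..<n} \<times> {..<n}"
  define Fd where "Fd = {f. \<forall>c. (c \<in> {..<n} \<longrightarrow> f c \<in> {-1, 0, 1 :: int}) \<and> (c \<notin> {..<n} \<longrightarrow> f c = 0)}"
  define Fe where "Fe = {g. \<forall>p. (p \<in> P \<longrightarrow> g p \<in> (UNIV :: bool set)) \<and> (p \<notin> P \<longrightarrow> g p = False)}"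
  have "valid_states n \<subseteq> Fd \<times> Fe \<times> Fe"
    unfolding valid_states_def Fd_def Fe_def P_def dis_def edge_def aux_def
    by (force simp: not_less)
  moreover have "finite (Fd \<times> Fe \<times> Fe)"
    unfolding Fd_def Fe_def P_def by (intro finite_cartesian_product finite_set_of_finite_funs) auto
  ultimately show ?thesis by (rule finite_subset)
qed

datatype event = Infect nat | Recover nat | Connect nat nat | Disconnect nat nat

locale epidemic =
  fixes n m :: nat and grp :: "nat \<Rightarrow> nat" and B \<rho> :: "nat \<Rightarrow> nat \<Rightarrow> real"
    and \<gamma> :: "nat \<Rightarrow> real" and lam :: real
begin

abbreviation "S \<equiv> valid_states n"
abbreviation "Q \<equiv> generator n m grp B \<rho> \<gamma> lam"

definition all_events :: "event set" where
  "all_events = Infect ` {..<n} \<union> Recover ` {..<n} \<union> case_prod Connect ` ({..<n} \<times> {..<n})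
         \<union> case_prod Disconnect ` ({..<n} \<times> {..<n})"

fun enabled :: "state \<Rightarrow> event \<Rightarrow> bool" where
  "enabled x (Infect c) = (dis x c = 0)"
| "enabled x (Recover c) = (dis x c = 1)"
| "enabled x (Connect c d) = (c \<noteq> d)"
| "enabled x (Disconnect c d) = (c \<noteq> d)"

fun target :: "state \<Rightarrow> event \<Rightarrow> state" where
  "target x (Infect c) = set_dis x c 1"
| "target x (Recover c) = set_dis x c (-1)"
| "target x (Connect c d) = upd_edge x c d True"
| "target x (Disconnect c d) = upd_edge x c d False"

fun rate :: "state \<Rightarrow> event \<Rightarrow> real" where
  "rate x (Infect c) = infection_rate n m grp B x c"
| "rate x (Recover c) = \<gamma> (grp c)"
| "rate x (Connect c d) = lam * \<rho> (grp c) (grp d) / real n"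
| "rate x (Disconnect c d) = lam * (1 - \<rho> (grp c) (grp d) / real n)"

definition indicator_drift :: "(state \<Rightarrow> bool) \<Rightarrow> state \<Rightarrow> event \<Rightarrow> real" where
  "indicator_drift P x e = (if enabled x e
     then rate x e * ((if P (target x e) then 1 else 0) - (if P x then 1 else 0)) else 0)"

lemma finite_all_events: "finite all_events"
  unfolding all_events_def by auto

lemma sum_all_events:
  fixes g :: "event \<Rightarrow> real"
  shows "(\<Sum>e\<in>all_events. g e) = (\<Sum>c<n. g (Infect c)) + (\<Sum>c<n. g (Recover c))
      + (\<Sum>c<n. \<Sum>d<n. g (Connect c d)) + (\<Sum>c<n. \<Sum>d<n. g (Disconnect c d))"
proof -
  have inj: "inj_on Infect {..<n}" "inj_on Recover {..<n}"
    "inj_on (case_prod Connect) ({..<n} \<times> {..<n})" "inj_on (case_prod Disconnect) ({..<n} \<times> {..<n})"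
    by (auto intro!: inj_onI)
  have "(\<Sum>e\<in>all_events. g e) = (\<Sum>e\<in>Infect ` {..<n}. g e) + (\<Sum>e\<in>Recover ` {..<n}. g e)
      + (\<Sum>e\<in>case_prod Connect ` ({..<n} \<times> {..<n}). g e)
      + (\<Sum>e\<in>case_prod Disconnect ` ({..<n} \<times> {..<n}). g e)"
    unfolding all_events_def by (subst sum.union_disjoint; (auto)?)+
  then show ?thesis
    by (simp add: sum.reindex[OF inj(1)] sum.reindex[OF inj(2)] sum.reindex[OF inj(3)]
        sum.reindex[OF inj(4)] sum.cartesian_product[symmetric] prod.case_distrib)
qed

lemma trans_rate_eq_sum_events:
  "trans_rate n m grp B \<rho> \<gamma> lam x y
     = (\<Sum>e\<in>all_events. if enabled x e \<and> y = target x e then rate x e else 0)"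
  unfolding sum_all_events trans_rate_def rate.simps enabled.simps target.simps by simp

lemma target_in_valid_states: "x \<in> S \<Longrightarrow> e \<in> all_events \<Longrightarrow> enabled x e \<Longrightarrow> target x e \<in> S"
  unfolding all_events_def valid_states_def by (cases e) auto

lemma target_neq: "enabled x e \<Longrightarrow> target x e \<noteq> x"
  by (cases e) (auto simp: state_eq_iff fun_eq_iff)

lemma generator_eq_sum_events:
  assumes x: "x \<in> S"
  shows "Q x y = (\<Sum>e\<in>all_events. indicator_drift ((=) y) x e)"
proof (cases "y = x")
  case True
  have "(\<Sum>y\<in>S - {x}. trans_rate n m grp B \<rho> \<gamma> lam x y)
      = (\<Sum>e\<in>all_events. \<Sum>y\<in>S - {x}.
          if y = target x e then (if enabled x e then rate x e else 0) else 0)"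
    unfolding trans_rate_eq_sum_events by (subst sum.swap) (intro sum.cong refl, auto)
  also have "\<dots> = (\<Sum>e\<in>all_events. if enabled x e then rate x e else 0)"
    using target_in_valid_states[OF x] target_neq finite_valid_states
    by (intro sum.cong refl) simp
  finally have "Q x x = - (\<Sum>e\<in>all_events. if enabled x e then rate x e else 0)"
    unfolding generator_def by simp
  also have "\<dots> = (\<Sum>e\<in>all_events. if enabled x e
      then rate x e * ((if x = target x e then 1 else 0) - (if x = x then 1 else 0)) else 0)"
    unfolding sum_negf[symmetric] by (intro sum.cong refl) (auto dest: target_neq)
  finally show ?thesis using True unfolding indicator_drift_def by (simp only:)
next
  case False
  then show ?thesis
    unfolding generator_def trans_rate_eq_sum_events indicator_drift_def by (auto intro: sum.cong)
qed

lemma sum_generator_eq_sum_events: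
  assumes x: "x \<in> S"
  shows "(\<Sum>y\<in>{y\<in>S. P y}. Q x y) = (\<Sum>e\<in>all_events. indicator_drift P x e)"
proof -
  have indicator: "(\<Sum>y\<in>{y\<in>S. P y}. if y = z then 1 else 0) = (if P z then 1 else (0::real))"
    if "z \<in> S" for z
    using finite_valid_states that by simp
  show ?thesis
    unfolding generator_eq_sum_events[OF x] indicator_drift_def
    using indicator x target_in_valid_states[OF x]
    by (subst sum.swap) (intro sum.cong refl,
        simp add: sum_distrib_left[symmetric] sum_subtractf)
qed

end

section \<open>The link (a,b) and the rest of the state\<close>

locale epidemic_link = epidemic +
  fixes a b :: nat
  assumes link_nodes: "a < n" "b < n" "a \<noteq> b"
begin

definition clear_link :: "state \<Rightarrow> state" where
  "clear_link x = (dis x, (edge x)((a, b) := False), (aux x)((a, b) := False))"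

definition collapsed :: "int \<Rightarrow> state" where
  "collapsed v = ((\<lambda>_. 0)(b := v), \<lambda>_. False, \<lambda>_. False)"

definition rest :: "state \<Rightarrow> state" where
  "rest x = (if dis x b = 0 then clear_link x else collapsed (dis x b))"

definition link :: "state \<Rightarrow> bool \<times> bool" where
  "link x = (edge x (a, b), aux x (a, b))"

definition rest_generator :: "state \<Rightarrow> state \<Rightarrow> real" where
  "rest_generator u v = (\<Sum>y\<in>{y\<in>S. rest y = v}. Q u y)"

definition link_generator :: "bool \<times> bool \<Rightarrow> bool \<times> bool \<Rightarrow> real" where
  "link_generator z z' =
       lam * \<rho> (grp a) (grp b) / real n
         * ((if z' = (True, \<not> snd z) then 1 else 0) - (if z' = z then 1 else 0))
     + lam * (1 - \<rho> (grp a) (grp b) / real n)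
         * ((if z' = (False, \<not> snd z) then 1 else 0) - (if z' = z then 1 else 0))"

lemma dis_clear_link [simp]: "dis (clear_link x) = dis x"
  and edge_clear_link [simp]: "edge (clear_link x) = (edge x)((a, b) := False)"
  and aux_clear_link [simp]: "aux (clear_link x) = (aux x)((a, b) := False)"
  unfolding clear_link_def by simp_all

lemma dis_collapsed [simp]: "dis (collapsed v) = (\<lambda>_. 0)(b := v)"
  and edge_collapsed [simp]: "edge (collapsed v) = (\<lambda>_. False)"
  and aux_collapsed [simp]: "aux (collapsed v) = (\<lambda>_. False)"
  unfolding collapsed_def by simp_all

lemma dis_rest_b [simp]: "dis (rest x) b = dis x b"
  unfolding rest_def by simp

lemma rest_rest [simp]: "rest (rest x) = rest x"
  unfolding rest_def by (auto simp: state_eq_iff)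

lemma rest_in_valid_states: "x \<in> S \<Longrightarrow> rest x \<in> S"
  unfolding rest_def valid_states_def using link_nodes by auto

lemma infection_rate_clear_link:
  assumes "dis x b = 0"
  shows "infection_rate n m grp B (clear_link x) c = infection_rate n m grp B x c"
  unfolding infection_rate_def using assms
  by (intro sum.cong refl arg_cong[where f = "\<lambda>s. B (grp c) _ * real (card s)"] Collect_cong) auto

lemma link_change_fixes_rest:
  assumes "enabled x e" "link (target x e) \<noteq> link x"
  shows "rest (target x e) = rest x \<and> (e = Connect a b \<or> e = Disconnect a b)"
proof -
  have "e = Connect a b \<or> e = Disconnect a b"
    using assms by (cases e) (auto simp: link_def split: if_splits)
  moreover have "rest (upd_edge x a b w) = rest x" for w
    unfolding rest_def by (auto simp: state_eq_iff fun_eq_iff)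
  ultimately show ?thesis by auto
qed

lemma rest_changes_iff:
  assumes "e \<in> all_events"
  shows "(enabled x e \<and> rest (target x e) \<noteq> rest x)
     \<longleftrightarrow> (enabled (rest x) e \<and> rest (target (rest x) e) \<noteq> rest x)"
  using assms link_nodes unfolding all_events_def
  by (cases e) (auto simp: rest_def state_eq_iff fun_eq_iff)

lemma rest_transition_from_rest:
  assumes "enabled x e" "rest (target x e) \<noteq> rest x"
  shows "rest (target (rest x) e) = rest (target x e) \<and> rate (rest x) e = rate x e"
  using assms link_nodes
  by (cases e) (auto simp: rest_def state_eq_iff fun_eq_iff infection_rate_clear_link)

lemma sum_indicator_drift_rest:
  assumes x: "x \<in> S"
  shows "(\<Sum>e\<in>all_events. indicator_drift (\<lambda>y. rest y = v) x e) = rest_generator (rest x) v"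
proof -
  have "indicator_drift (\<lambda>y. rest y = v) x e = indicator_drift (\<lambda>y. rest y = v) (rest x) e"
    if e: "e \<in> all_events" for e
  proof (cases "enabled x e \<and> rest (target x e) \<noteq> rest x")
    case True
    then show ?thesis unfolding indicator_drift_def
      using rest_changes_iff[OF e, of x] rest_transition_from_rest[of x e] by simp
  next
    case False
    then have "\<not> (enabled (rest x) e \<and> rest (target (rest x) e) \<noteq> rest x)"
      using rest_changes_iff[OF e, of x] by blast
    then show ?thesis using False unfolding indicator_drift_def by auto
  qed
  then have "(\<Sum>e\<in>all_events. indicator_drift (\<lambda>y. rest y = v) x e)
      = (\<Sum>e\<in>all_events. indicator_drift (\<lambda>y. rest y = v) (rest x) e)"
    by (rule sum.cong[OF refl])
  also have "\<dots> = rest_generator (rest x) v"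
    unfolding rest_generator_def
    by (rule sum_generator_eq_sum_events[OF rest_in_valid_states[OF x], symmetric])
  finally show ?thesis .
qed

lemma sum_indicator_drift_link:
  "(\<Sum>e\<in>all_events. indicator_drift (\<lambda>y. link y = z) x e) = link_generator (link x) z"
proof -
  have "{Connect a b, Disconnect a b} \<subseteq> all_events"
    unfolding all_events_def using link_nodes by auto
  then have "(\<Sum>e\<in>all_events. indicator_drift (\<lambda>y. link y = z) x e)
      = (\<Sum>e\<in>{Connect a b, Disconnect a b}. indicator_drift (\<lambda>y. link y = z) x e)"
  proof (intro sum.mono_neutral_right[OF finite_all_events] ballI)
    fix e assume "e \<in> all_events - {Connect a b, Disconnect a b}"
    then show "indicator_drift (\<lambda>y. link y = z) x e = 0"
      using link_change_fixes_rest[of x e] unfolding indicator_drift_def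
      by (cases "link (target x e) = link x") auto
  qed
  also have "\<dots> = link_generator (link x) z"
    unfolding link_generator_def indicator_drift_def using link_nodes by (simp add: link_def)
  finally show ?thesis .
qed

lemma indicator_drift_rest_link:
  "indicator_drift (\<lambda>y. rest y = v \<and> link y = z) x e
     = (if link x = z then 1 else 0) * indicator_drift (\<lambda>y. rest y = v) x e
       + (if rest x = v then 1 else 0) * indicator_drift (\<lambda>y. link y = z) x e"
proof (cases "enabled x e")
  case True
  then have "rest (target x e) \<noteq> rest x \<Longrightarrow> link (target x e) = link x"
    using link_change_fixes_rest by blast
  from indicator_pair_diff[OF this, where v = v and z = z] show ?thesis
    unfolding indicator_drift_def using True by (simp add: distrib_left ac_simps)
qed (simp add: indicator_drift_def)

lemma generator_lumps_to_kronecker_sum: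
  "lumps_to_kronecker_sum S Q rest link rest_generator link_generator"
  unfolding lumps_to_kronecker_sum_def
proof (intro ballI allI)
  fix x v z assume x: "x \<in> S"
  have "(\<Sum>y\<in>{y\<in>S. rest y = v \<and> link y = z}. Q x y)
      = (\<Sum>e\<in>all_events. indicator_drift (\<lambda>y. rest y = v \<and> link y = z) x e)"
    by (rule sum_generator_eq_sum_events[OF x])
  also have "\<dots> = (if link x = z then rest_generator (rest x) v else 0)
      + (if rest x = v then link_generator (link x) z else 0)"
    unfolding indicator_drift_rest_link sum.distrib sum_distrib_left[symmetric]
      sum_indicator_drift_rest[OF x] sum_indicator_drift_link by simp
  finally show "(\<Sum>y\<in>{y\<in>S. rest y = v \<and> link y = z}. Q x y)
      = (if link x = z then rest_generator (rest x) v else 0)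
        + (if rest x = v then link_generator (link x) z else 0)" .
qed

end

section \<open>Independence of the rest and the link\<close>

locale epidemic_ctmc = epidemic_link n m grp B \<rho> \<gamma> lam a b + prob_space M
  for n m grp B \<rho> \<gamma> lam a b and M :: "'w measure" +
  fixes X :: "real \<Rightarrow> 'w \<Rightarrow> state" and x0 :: state
  assumes ctmc: "is_ctmc M (valid_states n) (generator n m grp B \<rho> \<gamma> lam) x0 X"
begin

lemma x0_in_valid_states: "x0 \<in> S"
  using ctmc unfolding is_ctmc_def by blast

lemma X_in_valid_states: "\<omega> \<in> space M \<Longrightarrow> t \<ge> 0 \<Longrightarrow> X t \<omega> \<in> S"
  using ctmc unfolding is_ctmc_def by blast

lemma right_locally_constant_X: "\<omega> \<in> space M \<Longrightarrow> right_locally_constant (\<lambda>t. X t \<omega>)"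
  using ctmc unfolding is_ctmc_def right_locally_constant_def by blast

lemma X_eq_sets: "t \<ge> 0 \<Longrightarrow> {\<omega>\<in>space M. X t \<omega> = s} \<in> sets M"
  using ctmc unfolding is_ctmc_def by blast

lemma X_in_sets: "t \<ge> 0 \<Longrightarrow> {\<omega>\<in>space M. X t \<omega> \<in> W} \<in> sets M"
proof -
  assume t: "t \<ge> 0"
  have "{\<omega>\<in>space M. X t \<omega> \<in> W} = (\<Union>s\<in>S \<inter> W. {\<omega>\<in>space M. X t \<omega> = s})"
    using X_in_valid_states[OF _ t] by auto
  also have "\<dots> \<in> sets M" using finite_valid_states X_eq_sets[OF t] by auto
  finally show ?thesis .
qed

definition time_step :: "(nat \<Rightarrow> real) \<Rightarrow> nat \<Rightarrow> real" where
  "time_step ts i = ts i - (if i = 0 then 0 else ts (i - 1))"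

lemma prob_path:
  assumes "\<forall>i<k. 0 \<le> ts i \<and> ss i \<in> S" "\<forall>i. Suc i < k \<longrightarrow> ts i \<le> ts (Suc i)"
  shows "prob {\<omega>\<in>space M. \<forall>i<k. X (ts i) \<omega> = ss i}
          = (\<Prod>i<k. mat_exp S Q (time_step ts i) (if i = 0 then x0 else ss (i - 1)) (ss i))"
  using ctmc assms unfolding is_ctmc_def trans_prob_eq_mat_exp time_step_def by blast

lemma prob_cylinder:
  assumes ts0: "\<forall>i<N. 0 \<le> ts i" and mono: "\<forall>i. Suc i < N \<longrightarrow> ts i \<le> ts (Suc i)"
  shows "prob {\<omega>\<in>space M. \<forall>i<N. X (ts i) \<omega> \<in> E i}
       = (\<Sum>y\<in>S. path_weight S (\<lambda>i. mat_exp S Q (time_step ts i)) E x0 N y)"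
proof -
  define paths where "paths = Pi\<^sub>E {..<N} (\<lambda>i. S \<inter> E i)"
  define C where "C ss = {\<omega>\<in>space M. \<forall>i<N. X (ts i) \<omega> = ss i}" for ss
  have union: "{\<omega>\<in>space M. \<forall>i<N. X (ts i) \<omega> \<in> E i} = (\<Union>ss\<in>paths. C ss)"
  proof (intro equalityI subsetI)
    fix \<omega> assume \<omega>: "\<omega> \<in> {\<omega>\<in>space M. \<forall>i<N. X (ts i) \<omega> \<in> E i}"
    then have "restrict (\<lambda>i. X (ts i) \<omega>) {..<N} \<in> paths"
      unfolding paths_def using X_in_valid_states ts0 by (auto simp: restrict_PiE_iff)
    moreover have "\<omega> \<in> C (restrict (\<lambda>i. X (ts i) \<omega>) {..<N})" unfolding C_def using \<omega> by auto
    ultimately show "\<omega> \<in> (\<Union>ss\<in>paths. C ss)" by blast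
  qed (auto simp: C_def paths_def)
  have C_sets: "C ss \<in> sets M" for ss
  proof -
    have "C ss = space M \<inter> (\<Inter>i<N. {\<omega>\<in>space M. X (ts i) \<omega> = ss i})" unfolding C_def by auto
    then show ?thesis using X_eq_sets ts0 by auto
  qed
  have disjoint: "disjoint_family_on C paths"
  unfolding disjoint_family_on_def
  proof (intro ballI impI)
    fix ss ss' assume "ss \<in> paths" "ss' \<in> paths" "ss \<noteq> ss'"
    then obtain i where "i < N" "ss i \<noteq> ss' i"
      unfolding paths_def by (metis PiE_ext lessThan_iff)
    then show "C ss \<inter> C ss' = {}" unfolding C_def by auto
  qed
  have "finite paths"
    unfolding paths_def using finite_valid_states by (intro finite_PiE) auto
  then have "prob {\<omega>\<in>space M. \<forall>i<N. X (ts i) \<omega> \<in> E i} = (\<Sum>ss\<in>paths. prob (C ss))"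
    unfolding union using C_sets disjoint by (intro finite_measure_finite_Union) auto
  also have "\<dots> = (\<Sum>ss\<in>paths.
      \<Prod>i<N. mat_exp S Q (time_step ts i) (if i = 0 then x0 else ss (i - 1)) (ss i))"
    unfolding C_def paths_def using ts0 mono by (intro sum.cong refl prob_path) auto
  also have "\<dots> = (\<Sum>y\<in>S. path_weight S (\<lambda>i. mat_exp S Q (time_step ts i)) E x0 N y)"
    unfolding paths_def by (rule sum_paths_eq_path_weight[OF finite_valid_states x0_in_valid_states])
  finally show ?thesis .
qed

lemma indep_rest_link_cylinder:
  assumes ts0: "\<forall>i<N. 0 \<le> ts i" and mono: "\<forall>i. Suc i < N \<longrightarrow> ts i \<le> ts (Suc i)"
  shows "prob {\<omega>\<in>space M. \<forall>i<N. rest (X (ts i) \<omega>) \<in> A i \<and> link (X (ts i) \<omega>) \<in> C i}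
       = prob {\<omega>\<in>space M. \<forall>i<N. rest (X (ts i) \<omega>) \<in> A i}
         * prob {\<omega>\<in>space M. \<forall>i<N. link (X (ts i) \<omega>) \<in> C i}"
proof -
  define fV where "fV A = (\<Sum>v\<in>rest ` S. path_weight (rest ` S)
      (\<lambda>i. mat_exp (rest ` S) rest_generator (time_step ts i)) A (rest x0) N v)" for A
  define fZ where "fZ C = (\<Sum>z\<in>UNIV.
      path_weight UNIV (\<lambda>i. mat_exp UNIV link_generator (time_step ts i)) C (link x0) N z)" for C
  have f: "prob {\<omega>\<in>space M. \<forall>i<N. rest (X (ts i) \<omega>) \<in> A i \<and> link (X (ts i) \<omega>) \<in> C i}
      = fV A * fZ C" for A C
  proof -
    have "prob {\<omega>\<in>space M. \<forall>i<N. rest (X (ts i) \<omega>) \<in> A i \<and> link (X (ts i) \<omega>) \<in> C i}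
        = prob {\<omega>\<in>space M. \<forall>i<N. X (ts i) \<omega> \<in> {y. rest y \<in> A i \<and> link y \<in> C i}}"
      by simp
    also have "\<dots> = (\<Sum>y\<in>S. path_weight S (\<lambda>i. mat_exp S Q (time_step ts i))
        (\<lambda>i. {y. rest y \<in> A i \<and> link y \<in> C i}) x0 N y)"
      by (rule prob_cylinder[OF ts0 mono])
    also have "\<dots> = fV A * fZ C"
      unfolding fV_def fZ_def
      using finite_valid_states x0_in_valid_states generator_lumps_to_kronecker_sum
      by (intro sum_path_weight_lumped lumps_to_product_mat_exp)
    finally show ?thesis .
  qed
  have "fV (\<lambda>_. UNIV) * fZ (\<lambda>_. UNIV) = 1"
    using f[of "\<lambda>_. UNIV" "\<lambda>_. UNIV"] prob_space by simp
  then have "fV A * fZ C = (fV A * fZ (\<lambda>_. UNIV)) * (fV (\<lambda>_. UNIV) * fZ C)"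
    by (metis mult.assoc mult.left_commute mult_1_right)
  then show ?thesis
    using f f[of A "\<lambda>_. UNIV"] f[of "\<lambda>_. UNIV" C] by simp
qed

definition path_events :: "(state \<Rightarrow> 'z) \<Rightarrow> 'w set set" where
  "path_events h = {{\<omega>\<in>space M. \<forall>s\<in>J. h (X s \<omega>) \<in> A s} | J A. finite J \<and> (\<forall>s\<in>J. 0 \<le> s)}"

definition path_sigma :: "(state \<Rightarrow> 'z) \<Rightarrow> 'w measure" where
  "path_sigma h = sigma (space M) (path_events h)"

lemma path_events_subset_sets: "path_events h \<subseteq> sets M"
proof
  fix E assume "E \<in> path_events h"
  then obtain J A where E: "E = {\<omega>\<in>space M. \<forall>s\<in>J. h (X s \<omega>) \<in> A s}" and J: "finite J" "\<forall>s\<in>J. 0 \<le> s"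
    unfolding path_events_def by blast
  have "{\<omega>\<in>space M. h (X s \<omega>) \<in> A s} \<in> sets M" if "s \<in> J" for s
    using X_in_sets[of s "{y. h y \<in> A s}"] J that by simp
  then show "E \<in> sets M" unfolding E using J by (intro sets.sets_Collect_finite_All) auto
qed

lemma sets_path_sigma: "sets (path_sigma h) = sigma_sets (space M) (path_events h)"
  unfolding path_sigma_def using path_events_subset_sets sets.sets_into_space
  by (intro sets_measure_of) blast

lemma space_path_sigma: "space (path_sigma h) = space M"
  unfolding path_sigma_def by (rule space_measure_of_conv)

lemma measurable_from_path_sigma:
  assumes "f \<in> measurable (path_sigma h) N"
  shows "f \<in> measurable M N"
proof -
  have "sets (path_sigma h) \<subseteq> sets M"
    unfolding sets_path_sigma by (rule sets.sigma_sets_subset[OF path_events_subset_sets])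
  from measurable_mono[OF order_refl refl this space_path_sigma] assms show ?thesis by blast
qed

lemma path_events_Int_stable: "Int_stable (path_events h)"
proof (rule Int_stableI)
  fix E1 E2 assume "E1 \<in> path_events h" "E2 \<in> path_events h"
  then obtain J1 A1 J2 A2
    where E1: "E1 = {\<omega>\<in>space M. \<forall>s\<in>J1. h (X s \<omega>) \<in> A1 s}" and J1: "finite J1" "\<forall>s\<in>J1. 0 \<le> s"
      and E2: "E2 = {\<omega>\<in>space M. \<forall>s\<in>J2. h (X s \<omega>) \<in> A2 s}" and J2: "finite J2" "\<forall>s\<in>J2. 0 \<le> s"
    unfolding path_events_def by blast
  define A where "A s = (if s \<in> J1 then A1 s else UNIV) \<inter> (if s \<in> J2 then A2 s else UNIV)" for s
  have "E1 \<inter> E2 = {\<omega>\<in>space M. \<forall>s\<in>J1 \<union> J2. h (X s \<omega>) \<in> A s}"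
    unfolding E1 E2 A_def by auto
  then show "E1 \<inter> E2 \<in> path_events h" unfolding path_events_def using J1 J2 by blast
qed

lemma path_event_in_path_sigma:
  assumes "s \<ge> 0"
  shows "{\<omega>\<in>space (path_sigma h). P (h (X s \<omega>))} \<in> sets (path_sigma h)"
proof -
  have "{\<omega>\<in>space M. h (X s \<omega>) \<in> {y. P y}} \<in> path_events h"
    unfolding path_events_def using assms
    by (intro CollectI exI[of _ "{s}"] exI[of _ "\<lambda>_. {y. P y}"]) auto
  then have "{\<omega>\<in>space M. h (X s \<omega>) \<in> {y. P y}} \<in> sigma_sets (space M) (path_events h)"
    by (rule sigma_sets.Basic)
  then show ?thesis unfolding sets_path_sigma space_path_sigma by simp
qed

lemma indep_set_rest_link_path_events: "indep_set (path_events rest) (path_events link)"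
  unfolding indep_sets2_eq
proof (intro conjI ballI)
  show "path_events rest \<subseteq> events" "path_events link \<subseteq> events"
    using path_events_subset_sets by auto
  fix E1 E2 assume "E1 \<in> path_events rest" "E2 \<in> path_events link"
  then obtain J1 A1 J2 A2
    where E1: "E1 = {\<omega>\<in>space M. \<forall>s\<in>J1. rest (X s \<omega>) \<in> A1 s}" and J1: "finite J1" "\<forall>s\<in>J1. 0 \<le> s"
      and E2: "E2 = {\<omega>\<in>space M. \<forall>s\<in>J2. link (X s \<omega>) \<in> A2 s}" and J2: "finite J2" "\<forall>s\<in>J2. 0 \<le> s"
    unfolding path_events_def by blast
  define ts where "ts = (!) (sorted_list_of_set (J1 \<union> J2))"
  define N where "N = card (J1 \<union> J2)"
  have all_J: "(\<forall>s\<in>J1 \<union> J2. P s) \<longleftrightarrow> (\<forall>i<N. P (ts i))" for P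
  proof -
    have "set (sorted_list_of_set (J1 \<union> J2)) = J1 \<union> J2" "length (sorted_list_of_set (J1 \<union> J2)) = N"
      using J1(1) J2(1) unfolding N_def by simp_all
    then show ?thesis unfolding ts_def by (metis all_set_conv_all_nth)
  qed
  have ts0: "\<forall>i<N. 0 \<le> ts i"
    using all_J[of "\<lambda>s. 0 \<le> s"] J1(2) J2(2) by blast
  have mono: "\<forall>i. Suc i < N \<longrightarrow> ts i \<le> ts (Suc i)"
    unfolding ts_def N_def by (auto intro: sorted_nth_mono)
  define A where "A i = (if ts i \<in> J1 then A1 (ts i) else UNIV)" for i
  define C where "C i = (if ts i \<in> J2 then A2 (ts i) else UNIV)" for i
  have E1_ts: "E1 = {\<omega>\<in>space M. \<forall>i<N. rest (X (ts i) \<omega>) \<in> A i}"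
  proof -
    have "E1 = {\<omega>\<in>space M. \<forall>s\<in>J1 \<union> J2. s \<in> J1 \<longrightarrow> rest (X s \<omega>) \<in> A1 s}"
      unfolding E1 by auto
    then show ?thesis unfolding all_J A_def by auto
  qed
  have E2_ts: "E2 = {\<omega>\<in>space M. \<forall>i<N. link (X (ts i) \<omega>) \<in> C i}"
  proof -
    have "E2 = {\<omega>\<in>space M. \<forall>s\<in>J1 \<union> J2. s \<in> J2 \<longrightarrow> link (X s \<omega>) \<in> A2 s}"
      unfolding E2 by auto
    then show ?thesis unfolding all_J C_def by auto
  qed
  have "E1 \<inter> E2 = {\<omega>\<in>space M. \<forall>i<N. rest (X (ts i) \<omega>) \<in> A i \<and> link (X (ts i) \<omega>) \<in> C i}"
    unfolding E1_ts E2_ts by auto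
  then show "prob (E1 \<inter> E2) = prob E1 * prob E2"
    unfolding E1_ts E2_ts by (simp only: indep_rest_link_cylinder[OF ts0 mono])
qed

lemma indep_set_rest_link_path_sigma:
  "indep_set (sets (path_sigma rest)) (sets (path_sigma link))"
  unfolding sets_path_sigma
  by (rule indep_set_sigma_sets[OF indep_set_rest_link_path_events
        path_events_Int_stable path_events_Int_stable])

lemma K_var_measurable_rest:
  "(\<lambda>\<omega>. K_var (\<lambda>\<tau>. X \<tau> \<omega>) b t) \<in> borel_measurable (path_sigma rest)"
proof -
  define hit where "hit q \<omega> = (if dis (X q \<omega>) b = 1 then ereal q else \<infinity>)" for q \<omega>
  have "countable {q\<in>\<rat>. 0 \<le> (q::real)}"
    by (rule countable_subset[OF _ countable_rat]) auto
  moreover have "hit q \<in> borel_measurable (path_sigma rest)" if "q \<in> {q\<in>\<rat>. 0 \<le> q}" for q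
  proof -
    have "{\<omega>\<in>space (path_sigma rest). dis (rest (X q \<omega>)) b = 1} \<in> sets (path_sigma rest)"
      using that by (intro path_event_in_path_sigma[where P = "\<lambda>y. dis y b = 1"]) auto
    then show ?thesis unfolding hit_def by (intro measurable_If) auto
  qed
  ultimately have "(\<lambda>\<omega>. INF q\<in>{q\<in>\<rat>. 0 \<le> q}. hit q \<omega>) \<in> borel_measurable (path_sigma rest)"
    by (rule borel_measurable_INF)
  then have "(\<lambda>\<omega>. t - real_of_ereal (min (ereal t) (INF q\<in>{q\<in>\<rat>. 0 \<le> q}. hit q \<omega>)))
      \<in> borel_measurable (path_sigma rest)"
    by measurable
  then show ?thesis
  proof (rule measurable_cong[THEN iffD1, rotated])
    fix \<omega> assume "\<omega> \<in> space (path_sigma rest)"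
    then have "first_infection (\<lambda>\<tau>. X \<tau> \<omega>) b = (INF q\<in>{q\<in>\<rat>. 0 \<le> q}. hit q \<omega>)"
      unfolding first_infection_def hit_def space_path_sigma
      by (intro first_hitting_time_eq_INF_rationals[where P = "\<lambda>y. dis y b = 1"]
          right_locally_constant_X)
    then show "t - real_of_ereal (min (ereal t) (INF q\<in>{q\<in>\<rat>. 0 \<le> q}. hit q \<omega>))
        = K_var (\<lambda>\<tau>. X \<tau> \<omega>) b t"
      unfolding K_var_def by simp
  qed
qed

lemma aux_unchanged_in_path_sigma:
  assumes "\<tau> \<ge> 0" "t \<ge> 0"
  shows "{\<omega>\<in>space (path_sigma link). aux (X \<tau> \<omega>) (a, b) = aux (X t \<omega>) (a, b)}
      \<in> sets (path_sigma link)"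
proof -
  have aux_sets: "{\<omega>\<in>space (path_sigma link). aux (X s \<omega>) (a, b)} \<in> sets (path_sigma link)"
    if "s \<ge> 0" for s
  proof -
    have "{\<omega>\<in>space (path_sigma link). snd (link (X s \<omega>))} \<in> sets (path_sigma link)"
      using that by (rule path_event_in_path_sigma)
    then show ?thesis unfolding link_def by simp
  qed
  have "{\<omega>\<in>space (path_sigma link). aux (X \<tau> \<omega>) (a, b) = aux (X t \<omega>) (a, b)}
      = ({\<omega>\<in>space (path_sigma link). aux (X \<tau> \<omega>) (a, b)}
           \<inter> {\<omega>\<in>space (path_sigma link). aux (X t \<omega>) (a, b)})
        \<union> (space (path_sigma link) - {\<omega>\<in>space (path_sigma link). aux (X \<tau> \<omega>) (a, b)}
           - {\<omega>\<in>space (path_sigma link). aux (X t \<omega>) (a, b)})"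
    by auto
  then show ?thesis using aux_sets[OF assms(1)] aux_sets[OF assms(2)] by auto
qed

lemma last_update_T_measurable_link:
  assumes t: "t \<ge> 0"
  shows "(\<lambda>\<omega>. last_update_T (\<lambda>\<tau>. X \<tau> \<omega>) a b t) \<in> borel_measurable (path_sigma link)"
proof -
  define unchanged where "unchanged \<tau> \<omega> \<longleftrightarrow> aux (X \<tau> \<omega>) (a, b) = aux (X t \<omega>) (a, b)" for \<tau> \<omega>
  define last_change where
    "last_change \<omega> = Inf {s. 0 \<le> s \<and> s \<le> t \<and> (\<forall>\<tau>. s \<le> \<tau> \<and> \<tau> \<le> t \<longrightarrow> unchanged \<tau> \<omega>)}" for \<omega>
  define D where "D = insert t {q\<in>\<rat>. 0 \<le> q \<and> q \<le> t}"
  define R where "R q = {\<tau>\<in>\<rat>. q \<le> \<tau> \<and> \<tau> \<le> t}" for q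
  have unchanged_sets: "{\<omega>\<in>space (path_sigma link). unchanged \<tau> \<omega>} \<in> sets (path_sigma link)"
    if "\<tau> \<ge> 0" for \<tau>
    unfolding unchanged_def using that t by (rule aux_unchanged_in_path_sigma)
  have "last_change \<in> borel_measurable (path_sigma link)"
    unfolding borel_measurable_iff_less
  proof
    fix r
    have "{\<omega>\<in>space (path_sigma link). last_change \<omega> < r}
        = {\<omega>\<in>space (path_sigma link). \<exists>q\<in>D. q < r \<and> (\<forall>\<tau>\<in>R q. unchanged \<tau> \<omega>)}"
    proof (intro Collect_cong conj_cong refl)
      fix \<omega> assume "\<omega> \<in> space (path_sigma link)"
      then have "right_locally_constant (\<lambda>\<tau>. aux (X \<tau> \<omega>) (a, b))"
        unfolding space_path_sigma by (rule right_locally_constant_comp[OF right_locally_constant_X])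
      then show "last_change \<omega> < r \<longleftrightarrow> (\<exists>q\<in>D. q < r \<and> (\<forall>\<tau>\<in>R q. unchanged \<tau> \<omega>))"
        unfolding last_change_def D_def R_def unchanged_def by (rule Inf_final_constancy_less_iff[OF t])
    qed
    also have "\<dots> \<in> sets (path_sigma link)"
    proof (rule sets.sets_Collect_countable_Ex')
      show "countable D"
        unfolding D_def by (intro countable_insert countable_subset[OF _ countable_rat]) auto
      fix q assume "q \<in> D"
      then have "q \<ge> 0" unfolding D_def using t by auto
      have "{\<omega>\<in>space (path_sigma link). \<forall>\<tau>\<in>R q. unchanged \<tau> \<omega>} \<in> sets (path_sigma link)"
      proof (rule sets.sets_Collect_countable_All')
        show "countable (R q)" unfolding R_def by (intro countable_subset[OF _ countable_rat]) auto
      qed (use \<open>q \<ge> 0\<close> unchanged_sets in \<open>auto simp: R_def\<close>)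
      then show "{\<omega>\<in>space (path_sigma link). q < r \<and> (\<forall>\<tau>\<in>R q. unchanged \<tau> \<omega>)} \<in> sets (path_sigma link)"
        by (cases "q < r") auto
    qed
    finally show "{\<omega>\<in>space (path_sigma link). last_change \<omega> < r} \<in> sets (path_sigma link)" .
  qed
  then have "(\<lambda>\<omega>. t - last_change \<omega>) \<in> borel_measurable (path_sigma link)"
    by (intro borel_measurable_diff borel_measurable_const)
  then show ?thesis unfolding last_update_T_def last_change_def unchanged_def .
qed

lemma edge_measurable_link:
  assumes t: "t \<ge> 0"
  shows "(\<lambda>\<omega>. edge (X t \<omega>) (a, b)) \<in> measurable (path_sigma link) (count_space UNIV)"
  unfolding measurable_count_space_eq2_countable
proof (intro conjI ballI)
  fix y :: bool
  have "(\<lambda>\<omega>. edge (X t \<omega>) (a, b)) -` {y} \<inter> space (path_sigma link)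
      = {\<omega>\<in>space (path_sigma link). fst (link (X t \<omega>)) = y}"
    unfolding link_def by auto
  also have "\<dots> \<in> sets (path_sigma link)"
    by (rule path_event_in_path_sigma[OF t, where P = "\<lambda>z. fst z = y"])
  finally show "(\<lambda>\<omega>. edge (X t \<omega>) (a, b)) -` {y} \<inter> space (path_sigma link) \<in> sets (path_sigma link)" .
qed auto

end

theorem lemma5:
  fixes M :: "'w measure" and X :: "real \<Rightarrow> 'w \<Rightarrow> state"
    and n m :: nat and grp :: "nat \<Rightarrow> nat"
    and B \<rho> :: "nat \<Rightarrow> nat \<Rightarrow> real" and \<gamma> :: "nat \<Rightarrow> real" and lam :: real
    and x0 :: state and a b :: nat and t :: real
  assumes "prob_space M"
    and "n \<ge> 1"
    and grp_range: "\<forall>c<n. grp c < m"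
    and grp_onto: "\<forall>i<m. \<exists>c<n. grp c = i"
    and "\<forall>i<m. \<forall>j<m. B i j \<ge> 0"
    and "\<forall>i<m. \<forall>j<m. \<rho> i j > 0 \<and> \<rho> i j / real n \<le> 1"
    and "\<forall>i<m. \<gamma> i > 0"
    and "lam > 0"
    and "is_ctmc M (valid_states n) (generator n m grp B \<rho> \<gamma> lam) x0 X"
    and "a < n" and "b < n" and "a \<noteq> b"
    and "t \<ge> 0"
  defines "K \<equiv> \<lambda>\<omega>. K_var (\<lambda>\<tau>. X \<tau> \<omega>) b t"
    and "TE \<equiv> \<lambda>\<omega>. (last_update_T (\<lambda>\<tau>. X \<tau> \<omega>) a b t, edge (X t \<omega>) (a,b))"
  shows "K \<in> borel_measurable M
    \<and> TE \<in> measurable M (borel \<Otimes>\<^sub>M count_space UNIV)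
    \<and> (\<forall>A \<in> sets borel. \<forall>C \<in> sets (borel \<Otimes>\<^sub>M count_space UNIV).
          measure M (K -` A \<inter> TE -` C \<inter> space M)
            = measure M (K -` A \<inter> space M) * measure M (TE -` C \<inter> space M))"
proof -
  interpret epidemic_ctmc n m grp B \<rho> \<gamma> lam a b M X x0
    using assms(1,9-12) unfolding epidemic_ctmc_def epidemic_link_def epidemic_ctmc_axioms_def
    by blast
  have K_rest: "K \<in> borel_measurable (path_sigma rest)"
    unfolding K_def by (rule K_var_measurable_rest)
  have TE_link: "TE \<in> measurable (path_sigma link) (borel \<Otimes>\<^sub>M count_space UNIV)"
    unfolding TE_def using \<open>t \<ge> 0\<close>
    by (intro measurable_Pair last_update_T_measurable_link edge_measurable_link)
  have "measure M (K -` A \<inter> TE -` C \<inter> space M)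
      = measure M (K -` A \<inter> space M) * measure M (TE -` C \<inter> space M)"
    if "A \<in> sets borel" "C \<in> sets (borel \<Otimes>\<^sub>M count_space UNIV)" for A C
  proof -
    have "K -` A \<inter> space M \<in> sets (path_sigma rest)" "TE -` C \<inter> space M \<in> sets (path_sigma link)"
      using measurable_sets[OF K_rest that(1)] measurable_sets[OF TE_link that(2)]
      unfolding space_path_sigma by auto
    moreover have "K -` A \<inter> TE -` C \<inter> space M = (K -` A \<inter> space M) \<inter> (TE -` C \<inter> space M)"
      by blast
    ultimately show ?thesis using indep_setD[OF indep_set_rest_link_path_sigma] by simp
  qed
  then show ?thesis
    using measurable_from_path_sigma[OF K_rest] measurable_from_path_sigma[OF TE_link] by blast
qed

end
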